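(* Let $C$ be a parity complex in which every cell $(M',P')$ has $M'$ and $P'$ receptive. Let $m,n\in\mathbb N$, let $(M,P)$ be an $n$-cell, and let $X\subseteq C_{n+1}$ be a well-formed set with exactly $m$ elements such that $X^\pm\subseteq M_n$. Put $Y=(M_n\cup X^-)\setminus X^+$. Then: (B) $(M^{n-1}\cup Y,\ P^{n-1}\cup Y)$ is a cell and $X^-\cap M_n=\emptyset$; (C) $(M^{n-1}\cup Y\cup X,\ P\cup X)$ is a cell.
   Context: A parity complex consists of a set $C=\bigsqcup_{n\ge 0}C_n$ graded by dimension, together with, for each $n\ge 0$ and each $x\in C_{n+1}$, two disjoint, non-empty, finite subsets $x^-,x^+\subseteq C_n$ (for $x\in C_0$ put $x^-=x^+=\emptyset$), subject to Axioms 1, 2, 3A, 3B below. Notation: for $S\subseteq C$, $S^-=\bigcup_{w\in S}w^-$, $S^+=\bigcup_{w\in S}w^+$, $S^\mp=S^-\setminus S^+$, $S^\pm=S^+\setminus S^-$; $x^{-+}=(x^-)^+$, etc.; $S_n=S\cap C_n$ and $S^n=\bigcup_{k=0}^n S_k$ (the $n$-skeleton; $S^{-1}=\emptyset$); $S$ is $n$-dimensional when $S=S^n$. For $S,T\subseteq C$ write $S\perp T$ when $S^-\cap T^-=\emptyset$ and $S^+\cap T^+=\emptyset$; $x\perp y$ means $\{x\}\perp\{y\}$. A set $S$ is well-formed when $S_0$ has at most one element and for every $n>0$ and all distinct $x,y\in S_n$, $x\perp y$. Write $x<y$ when $x^+\cap y^-\neq\emptyset$, and let $\lhd$ be the reflexive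 transitive closure of $<$. Axioms: (1) for all $x$, $x^{++}\cup x^{--}=x^{-+}\cup x^{+-}$; (2) for all $x$, $x^-$ and $x^+$ are well-formed; (3A) $x\lhd y$ and $y\lhd x$ imply $x=y$; (3B) if $x\lhd y$ then there is no $z$ with $x\in z^+$ and $y\in z^-$, and no $z$ with $y\in z^+$ and $x\in z^-$. For $S,M,P\subseteq C$, $S$ moves $M$ to $P$ when $M=(P\cup S^-)\setminus S^+$ and $P=(M\cup S^+)\setminus S^-$. A cell is a pair $(M,P)$ of non-empty, well-formed, finite subsets of $C$ such that $M$ moves $M$ to $P$ and $P$ moves $M$ to $P$; it is an $n$-cell when $M\cup P$ is $n$-dimensional. A set $S\subseteq C$ is receptive when for all $x\in C$: if $x^{-+}\cap x^{++}\subseteq S$ and $S\cap x^{--}=\emptyset$ then $S\cap x^{+-}=\emptyset$; and if $x^{+-}\cap x^{--}\subseteq S$ and $S\cap x^{++}=\emptyset$ then $S\cap x^{-+}=\emptyset$. *)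

theory Defs
  imports Main
begin

text \<open>A graded set C with dimension function dim and face maps mi (x^-) and pl (x^+).\<close>

definition sminus :: "('a \<Rightarrow> 'a set) \<Rightarrow> 'a set \<Rightarrow> 'a set" where
  "sminus mi S = (\<Union>w\<in>S. mi w)"

definition splus :: "('a \<Rightarrow> 'a set) \<Rightarrow> 'a set \<Rightarrow> 'a set" where
  "splus pl S = (\<Union>w\<in>S. pl w)"

definition smp :: "('a \<Rightarrow> 'a set) \<Rightarrow> ('a \<Rightarrow> 'a set) \<Rightarrow> 'a set \<Rightarrow> 'a set" where
  "smp mi pl S = sminus mi S - splus pl S"

definition spm :: "('a \<Rightarrow> 'a set) \<Rightarrow> ('a \<Rightarrow> 'a set) \<Rightarrow> 'a set \<Rightarrow> 'a set" where
  "spm mi pl S = splus pl S - sminus mi S"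

definition grade :: "('a \<Rightarrow> nat) \<Rightarrow> 'a set \<Rightarrow> nat \<Rightarrow> 'a set" where
  "grade dim S n = {x\<in>S. dim x = n}"

text \<open>S^k, the k-skeleton, for an integer k (so that S^{-1} is empty)\<close>
definition skel :: "('a \<Rightarrow> nat) \<Rightarrow> 'a set \<Rightarrow> int \<Rightarrow> 'a set" where
  "skel dim S k = {x\<in>S. int (dim x) \<le> k}"

definition orth :: "('a \<Rightarrow> 'a set) \<Rightarrow> ('a \<Rightarrow> 'a set) \<Rightarrow> 'a set \<Rightarrow> 'a set \<Rightarrow> bool" where
  "orth mi pl S T \<longleftrightarrow> sminus mi S \<inter> sminus mi T = {} \<and> splus pl S \<inter> splus pl T = {}"

definition well_formed :: "('a \<Rightarrow> nat) \<Rightarrow> ('a \<Rightarrow> 'a set) \<Rightarrow> ('a \<Rightarrow> 'a set) \<Rightarrow> 'a set \<Rightarrow> bool" where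
  "well_formed dim mi pl S \<longleftrightarrow>
     (\<forall>x\<in>S. \<forall>y\<in>S. dim x = 0 \<and> dim y = 0 \<longrightarrow> x = y) \<and>
     (\<forall>n>0. \<forall>x\<in>grade dim S n. \<forall>y\<in>grade dim S n. x \<noteq> y \<longrightarrow> orth mi pl {x} {y})"

definition prec :: "'a set \<Rightarrow> ('a \<Rightarrow> 'a set) \<Rightarrow> ('a \<Rightarrow> 'a set) \<Rightarrow> 'a \<Rightarrow> 'a \<Rightarrow> bool" where
  "prec C mi pl x y \<longleftrightarrow> x \<in> C \<and> y \<in> C \<and> pl x \<inter> mi y \<noteq> {}"

definition preceq :: "'a set \<Rightarrow> ('a \<Rightarrow> 'a set) \<Rightarrow> ('a \<Rightarrow> 'a set) \<Rightarrow> 'a \<Rightarrow> 'a \<Rightarrow> bool" where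
  "preceq C mi pl = (prec C mi pl)\<^sup>*\<^sup>*"

definition parity_complex ::
  "'a set \<Rightarrow> ('a \<Rightarrow> nat) \<Rightarrow> ('a \<Rightarrow> 'a set) \<Rightarrow> ('a \<Rightarrow> 'a set) \<Rightarrow> bool" where
  "parity_complex C dim mi pl \<longleftrightarrow>
     (\<forall>x\<in>C. dim x = 0 \<longrightarrow> mi x = {} \<and> pl x = {}) \<and>
     (\<forall>x\<in>C. dim x > 0 \<longrightarrow>
        mi x \<subseteq> C \<and> pl x \<subseteq> C \<and>
        (\<forall>y\<in>mi x \<union> pl x. Suc (dim y) = dim x) \<and>
        mi x \<inter> pl x = {} \<and> mi x \<noteq> {} \<and> pl x \<noteq> {} \<and> finite (mi x) \<and> finite (pl x)) \<and>
     \<comment> \<open>Axiom 1\<close>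
     (\<forall>x\<in>C. splus pl (pl x) \<union> sminus mi (mi x) = splus pl (mi x) \<union> sminus mi (pl x)) \<and>
     \<comment> \<open>Axiom 2\<close>
     (\<forall>x\<in>C. well_formed dim mi pl (mi x) \<and> well_formed dim mi pl (pl x)) \<and>
     \<comment> \<open>Axiom 3A\<close>
     (\<forall>x\<in>C. \<forall>y\<in>C. preceq C mi pl x y \<and> preceq C mi pl y x \<longrightarrow> x = y) \<and>
     \<comment> \<open>Axiom 3B\<close>
     (\<forall>x\<in>C. \<forall>y\<in>C. preceq C mi pl x y \<longrightarrow>
        \<not> (\<exists>z\<in>C. x \<in> pl z \<and> y \<in> mi z) \<and> \<not> (\<exists>z\<in>C. y \<in> pl z \<and> x \<in> mi z))"

definition moves :: "('a \<Rightarrow> 'a set) \<Rightarrow> ('a \<Rightarrow> 'a set) \<Rightarrow> 'a set \<Rightarrow> 'a set \<Rightarrow> 'a set \<Rightarrow> bool" where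
  "moves mi pl S M P \<longleftrightarrow> M = (P \<union> sminus mi S) - splus pl S \<and> P = (M \<union> splus pl S) - sminus mi S"

definition cell ::
  "'a set \<Rightarrow> ('a \<Rightarrow> nat) \<Rightarrow> ('a \<Rightarrow> 'a set) \<Rightarrow> ('a \<Rightarrow> 'a set) \<Rightarrow> 'a set \<Rightarrow> 'a set \<Rightarrow> bool" where
  "cell C dim mi pl M P \<longleftrightarrow>
     M \<subseteq> C \<and> P \<subseteq> C \<and> M \<noteq> {} \<and> P \<noteq> {} \<and> finite M \<and> finite P \<and>
     well_formed dim mi pl M \<and> well_formed dim mi pl P \<and>
     moves mi pl M M P \<and> moves mi pl P M P"

definition n_cell ::
  "'a set \<Rightarrow> ('a \<Rightarrow> nat) \<Rightarrow> ('a \<Rightarrow> 'a set) \<Rightarrow> ('a \<Rightarrow> 'a set) \<Rightarrow> nat \<Rightarrow> 'a set \<Rightarrow> 'a set \<Rightarrow> bool" where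
  "n_cell C dim mi pl n M P \<longleftrightarrow> cell C dim mi pl M P \<and> skel dim (M \<union> P) (int n) = M \<union> P"

definition receptive :: "'a set \<Rightarrow> ('a \<Rightarrow> 'a set) \<Rightarrow> ('a \<Rightarrow> 'a set) \<Rightarrow> 'a set \<Rightarrow> bool" where
  "receptive C mi pl S \<longleftrightarrow>
     (\<forall>x\<in>C.
       (splus pl (mi x) \<inter> splus pl (pl x) \<subseteq> S \<and> S \<inter> sminus mi (mi x) = {}
          \<longrightarrow> S \<inter> sminus mi (pl x) = {}) \<and>
       (sminus mi (pl x) \<inter> sminus mi (mi x) \<subseteq> S \<and> S \<inter> splus pl (pl x) = {}
          \<longrightarrow> S \<inter> splus pl (mi x) = {}))"

end

theory Submission
  imports Defs
begin

text \<open>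
  Part (B) is proved by induction on \<open>n\<close> and, for fixed \<open>n\<close>, by induction on \<open>X\<close>: a
  \<open><\<close>-maximal \<open>x \<in> X\<close> has \<open>x\<^sup>+ \<subseteq> M\<^sub>n\<close>, so it suffices to move an \<open>n\<close>-cell back along a single
  \<open>(n+1)\<close>-cell \<open>x\<close>, i.e. to replace \<open>x\<^sup>+\<close> by \<open>x\<^sup>-\<close> in its top grade. Axiom 1 and the
  loop-freeness axioms make this work as soon as no internal face \<open>z \<in> x\<^sup>-\<^sup>- \<inter> x\<^sup>-\<^sup>+\<close> lies in
  \<open>M\<^sub>n\<^sub>-\<^sub>1\<close>, in \<open>P\<^sub>n\<^sub>-\<^sub>1\<close> or among the faces of \<open>M\<^sub>n\<close>. To exclude such a \<open>z\<close>, move the target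
  \<open>(n-1)\<close>-cell of \<open>(M, P)\<close> back along the set \<open>U\<close> of those \<open>n\<close>-cells of \<open>M\<^sub>n\<close> that are reachable
  from \<open>x\<^sup>+\<close> or from a cell having \<open>z\<close> as a negative face. By induction on \<open>n\<close> this yields a cell
  \<open>(R, _)\<close>. Axiom 3 forbids any cell of \<open>U\<close> to have \<open>z\<close> or an element of \<open>x\<^sup>+\<^sup>- \<inter> x\<^sup>-\<^sup>-\<close> as a
  positive face, so \<open>R\<close> contains \<open>z\<close> and \<open>x\<^sup>+\<^sup>- \<inter> x\<^sup>-\<^sup>-\<close>, while it misses \<open>x\<^sup>+\<^sup>+\<close> because
  \<open>x\<^sup>+ \<subseteq> U\<close>. Receptivity of \<open>R\<close> at \<open>x\<close> then contradicts \<open>z \<in> x\<^sup>-\<^sup>+\<close>.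
  Part (C) glues \<open>X\<close> on top of the cell of part (B).
\<close>

lemma sminus_iff [simp]: "z \<in> sminus mi S \<longleftrightarrow> (\<exists>w\<in>S. z \<in> mi w)"
  by (auto simp: sminus_def)

lemma splus_iff [simp]: "z \<in> splus pl S \<longleftrightarrow> (\<exists>w\<in>S. z \<in> pl w)"
  by (auto simp: splus_def)

lemma sminus_empty [simp]: "sminus mi {} = {}"
  by (simp add: sminus_def)

lemma sminus_singleton [simp]: "sminus mi {x} = mi x"
  by (simp add: sminus_def)

lemma splus_singleton [simp]: "splus pl {x} = pl x"
  by (simp add: splus_def)

lemma grade_iff [simp]: "z \<in> grade dim S j \<longleftrightarrow> z \<in> S \<and> dim z = j"
  by (auto simp: grade_def)

lemma grade_subset: "grade dim S j \<subseteq> S"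
  by auto

lemma skel_iff [simp]: "z \<in> skel dim S k \<longleftrightarrow> z \<in> S \<and> int (dim z) \<le> k"
  by (auto simp: skel_def)

lemma grades_eqI: "(\<And>j. grade dim A j = grade dim B j) \<Longrightarrow> A = B"
  by (auto simp: set_eq_iff)

lemma grade_Un [simp]: "grade dim (A \<union> B) j = grade dim A j \<union> grade dim B j"
  by auto

lemma grade_Diff [simp]: "grade dim (A - B) j = grade dim A j - grade dim B j"
  by auto

lemma grade_skel [simp]: "grade dim (skel dim S k) j = (if int j \<le> k then grade dim S j else {})"
  by auto

lemma grade_skel_Un:
  assumes "\<forall>a\<in>T. dim a = n"
  shows "grade dim (skel dim M (int n - 1) \<union> T) j
           = (if j < n then grade dim M j else if j = n then T else {})"
  using assms by auto

lemma grade_skel_Un_top: "\<forall>a\<in>T. dim a = n \<Longrightarrow> grade dim (skel dim M (int n - 1) \<union> T) n = T"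
  by (simp add: grade_skel_Un del: grade_Un)

lemma skel_skel_Un_top:
  "\<forall>a\<in>T. dim a = n \<Longrightarrow> skel dim (skel dim M (int n - 1) \<union> T) (int n - 1) = skel dim M (int n - 1)"
  by auto

lemma well_formed_iff:
  "well_formed dim mi pl S \<longleftrightarrow>
     (\<forall>a\<in>S. \<forall>b\<in>S. a \<noteq> b \<longrightarrow> dim a = dim b \<longrightarrow> 0 < dim a \<and> mi a \<inter> mi b = {} \<and> pl a \<inter> pl b = {})"
  (is "_ \<longleftrightarrow> ?orth")
proof
  assume wf: "well_formed dim mi pl S"
  show ?orth
  proof (intro ballI impI)
    fix a b assume ab: "a \<in> S" "b \<in> S" "a \<noteq> b" "dim a = dim b"
    then have "0 < dim a" using wf unfolding well_formed_def by (metis neq0_conv)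
    moreover have "orth mi pl {a} {b}" using wf ab \<open>0 < dim a\<close> unfolding well_formed_def by auto
    ultimately show "0 < dim a \<and> mi a \<inter> mi b = {} \<and> pl a \<inter> pl b = {}"
      unfolding orth_def by auto
  qed
next
  assume H: ?orth
  show "well_formed dim mi pl S"
    unfolding well_formed_def orth_def
  proof (intro conjI ballI allI impI)
    fix x y assume "x \<in> S" "y \<in> S" "dim x = 0 \<and> dim y = 0"
    then show "x = y" using H by (metis less_not_refl)
  qed (use H in auto)
qed

lemma well_formedD:
  "well_formed dim mi pl S \<Longrightarrow> a \<in> S \<Longrightarrow> b \<in> S \<Longrightarrow> a \<noteq> b \<Longrightarrow> dim a = dim b \<Longrightarrow>
     0 < dim a \<and> mi a \<inter> mi b = {} \<and> pl a \<inter> pl b = {}"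
  unfolding well_formed_iff by blast

lemma well_formed_subset: "well_formed dim mi pl S \<Longrightarrow> T \<subseteq> S \<Longrightarrow> well_formed dim mi pl T"
  unfolding well_formed_iff by blast

lemma well_formed_empty [simp]: "well_formed dim mi pl {}"
  by (simp add: well_formed_iff)

lemma well_formed_iff_grades: "well_formed dim mi pl S \<longleftrightarrow> (\<forall>j. well_formed dim mi pl (grade dim S j))"
proof
  show "well_formed dim mi pl S \<Longrightarrow> \<forall>j. well_formed dim mi pl (grade dim S j)"
    using well_formed_subset[OF _ grade_subset] by blast
next
  assume H: "\<forall>j. well_formed dim mi pl (grade dim S j)"
  show "well_formed dim mi pl S"
    unfolding well_formed_iff
  proof (intro ballI impI)
    fix a b assume "a \<in> S" "b \<in> S" "a \<noteq> b" "dim a = dim b"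
    then show "0 < dim a \<and> mi a \<inter> mi b = {} \<and> pl a \<inter> pl b = {}"
      using well_formedD[OF H[rule_format, of "dim a"], of a b] by auto
  qed
qed

lemma well_formed_Un:
  assumes "well_formed dim mi pl S" "well_formed dim mi pl T" "\<forall>a\<in>S \<union> T. 0 < dim a"
    and "sminus mi S \<inter> sminus mi T = {}" "splus pl S \<inter> splus pl T = {}"
  shows "well_formed dim mi pl (S \<union> T)"
  unfolding well_formed_iff
proof (intro ballI impI)
  fix a b assume ab: "a \<in> S \<union> T" "b \<in> S \<union> T" "a \<noteq> b" "dim a = dim b"
  have "mi a \<inter> mi b = {} \<and> pl a \<inter> pl b = {}"
  proof (cases "a \<in> S \<and> b \<in> S \<or> a \<in> T \<and> b \<in> T")
    case True
    then show ?thesis using well_formedD[OF assms(1)] well_formedD[OF assms(2)] ab by blast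
  next
    case False
    then have "a \<in> S \<and> b \<in> T \<or> a \<in> T \<and> b \<in> S" using ab by blast
    then show ?thesis using assms(4,5) by (auto simp: disjoint_iff)
  qed
  with assms(3) ab show "0 < dim a \<and> mi a \<inter> mi b = {} \<and> pl a \<inter> pl b = {}" by blast
qed

lemma well_formed_orth_Diff:
  assumes "well_formed dim mi pl S" "\<forall>a\<in>S. dim a = n" "T \<subseteq> S"
  shows "orth mi pl (S - T) T"
  unfolding orth_def
proof (intro conjI equalityI subsetI)
  fix y assume "y \<in> sminus mi (S - T) \<inter> sminus mi T"
  then obtain a b where "a \<in> S - T" "b \<in> T" "y \<in> mi a" "y \<in> mi b" by auto
  with assms show "y \<in> {}" using well_formedD[of dim mi pl S a b] by auto
next
  fix y assume "y \<in> splus pl (S - T) \<inter> splus pl T"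
  then obtain a b where "a \<in> S - T" "b \<in> T" "y \<in> pl a" "y \<in> pl b" by auto
  with assms show "y \<in> {}" using well_formedD[of dim mi pl S a b] by auto
qed simp_all

lemma spm_upward_closed:
  assumes "U \<subseteq> A" and "\<And>g e y. g \<in> U \<Longrightarrow> e \<in> A \<Longrightarrow> y \<in> pl g \<Longrightarrow> y \<in> mi e \<Longrightarrow> e \<in> U"
  shows "spm mi pl U \<subseteq> splus pl A - sminus mi A"
proof
  fix y assume "y \<in> spm mi pl U"
  then obtain g where g: "g \<in> U" "y \<in> pl g" and y: "\<forall>e\<in>U. y \<notin> mi e"
    unfolding spm_def by auto
  have "y \<notin> mi e" if "e \<in> A" for e
    using assms(2)[OF g(1) that g(2)] y by blast
  then show "y \<in> splus pl A - sminus mi A" using g assms(1) by auto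
qed

lemma moves_empty [simp]: "moves mi pl {} A B \<longleftrightarrow> A = B"
  unfolding moves_def sminus_def splus_def by auto

definition move_back :: "('a \<Rightarrow> 'a set) \<Rightarrow> ('a \<Rightarrow> 'a set) \<Rightarrow> 'a set \<Rightarrow> 'a set \<Rightarrow> 'a set" where
  "move_back mi pl X S = (S \<union> sminus mi X) - splus pl X"

lemma move_back_empty [simp]: "move_back mi pl {} S = S"
  by (auto simp: move_back_def)

lemma moves_move_back:
  "spm mi pl X \<subseteq> S \<Longrightarrow> sminus mi X \<inter> S = {} \<Longrightarrow> moves mi pl X (move_back mi pl X S) S"
  unfolding moves_def move_back_def spm_def by blast

lemma move_back_remove:
  "x \<in> X \<Longrightarrow> pl x \<inter> sminus mi (X - {x}) = {} \<Longrightarrow>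
     move_back mi pl (X - {x}) (move_back mi pl {x} S) = move_back mi pl X S"
  unfolding move_back_def by fastforce

lemma spm_remove_subset_move_back:
  assumes X: "well_formed dim mi pl X" "\<forall>a\<in>X. dim a = n" and x: "x \<in> X"
    and spm: "spm mi pl X \<subseteq> S"
  shows "spm mi pl (X - {x}) \<subseteq> move_back mi pl {x} S"
proof
  fix y assume "y \<in> spm mi pl (X - {x})"
  then obtain e where e: "e \<in> X" "e \<noteq> x" "y \<in> pl e" and y: "y \<notin> sminus mi (X - {x})"
    unfolding spm_def by auto
  have "y \<notin> pl x" using well_formedD[OF X(1) e(1) x e(2)] X(2) e x by auto
  moreover have "y \<in> S" if "y \<notin> mi x"
  proof -
    have "y \<in> spm mi pl X" using that e y unfolding spm_def by auto
    then show ?thesis using spm by (rule subsetD[rotated])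
  qed
  ultimately show "y \<in> move_back mi pl {x} S" unfolding move_back_def by auto
qed

lemma sminus_disjoint_remove:
  "x \<in> X \<Longrightarrow> pl x \<inter> sminus mi (X - {x}) = {} \<Longrightarrow> mi x \<inter> S = {} \<Longrightarrow>
     sminus mi (X - {x}) \<inter> move_back mi pl {x} S = {} \<Longrightarrow> sminus mi X \<inter> S = {}"
  unfolding move_back_def by (auto simp: disjoint_iff)

locale parity_cplx =
  fixes C :: "'a set" and dim :: "'a \<Rightarrow> nat" and mi pl :: "'a \<Rightarrow> 'a set"
  assumes pc: "parity_complex C dim mi pl"
begin

lemma mi_subset: "x \<in> C \<Longrightarrow> mi x \<subseteq> C"
  using pc unfolding parity_complex_def by (cases "dim x = 0") auto

lemma pl_subset: "x \<in> C \<Longrightarrow> pl x \<subseteq> C"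
  using pc unfolding parity_complex_def by (cases "dim x = 0") auto

lemma dim_mi: "x \<in> C \<Longrightarrow> y \<in> mi x \<Longrightarrow> dim x = Suc (dim y)"
  using pc unfolding parity_complex_def by (cases "dim x = 0") auto

lemma dim_pl: "x \<in> C \<Longrightarrow> y \<in> pl x \<Longrightarrow> dim x = Suc (dim y)"
  using pc unfolding parity_complex_def by (cases "dim x = 0") auto

lemma mi_pl_disjoint: "x \<in> C \<Longrightarrow> mi x \<inter> pl x = {}"
  using pc unfolding parity_complex_def by (cases "dim x = 0") auto

lemma mi_nonempty: "x \<in> C \<Longrightarrow> 0 < dim x \<Longrightarrow> mi x \<noteq> {}"
  using pc unfolding parity_complex_def by auto

lemma pl_nonempty: "x \<in> C \<Longrightarrow> 0 < dim x \<Longrightarrow> pl x \<noteq> {}"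
  using pc unfolding parity_complex_def by auto

lemma finite_mi: "x \<in> C \<Longrightarrow> finite (mi x)"
  using pc unfolding parity_complex_def by (cases "dim x = 0") auto

lemma faces_parity:
  "x \<in> C \<Longrightarrow> splus pl (pl x) \<union> sminus mi (mi x) = splus pl (mi x) \<union> sminus mi (pl x)"
  using pc unfolding parity_complex_def by blast

lemma well_formed_mi: "x \<in> C \<Longrightarrow> well_formed dim mi pl (mi x)"
  using pc unfolding parity_complex_def by blast

lemma preceq_antisym:
  "x \<in> C \<Longrightarrow> y \<in> C \<Longrightarrow> preceq C mi pl x y \<Longrightarrow> preceq C mi pl y x \<Longrightarrow> x = y"
  using pc unfolding parity_complex_def by blast

lemma faces_not_preceq:
  assumes "z \<in> C" "a \<in> mi z" "b \<in> pl z"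
  shows "\<not> preceq C mi pl a b" "\<not> preceq C mi pl b a"
proof -
  have "a \<in> C" "b \<in> C" using assms mi_subset pl_subset by auto
  moreover have "\<forall>x\<in>C. \<forall>y\<in>C. preceq C mi pl x y \<longrightarrow>
        \<not> (\<exists>z\<in>C. x \<in> pl z \<and> y \<in> mi z) \<and> \<not> (\<exists>z\<in>C. y \<in> pl z \<and> x \<in> mi z)"
    using pc unfolding parity_complex_def by (elim conjE) assumption
  ultimately show "\<not> preceq C mi pl a b" "\<not> preceq C mi pl b a"
    using assms by blast+
qed

lemma prec_preceq: "a \<in> C \<Longrightarrow> b \<in> C \<Longrightarrow> y \<in> pl a \<Longrightarrow> y \<in> mi b \<Longrightarrow> preceq C mi pl a b"
  unfolding preceq_def prec_def by blast

lemma preceq_trans: "preceq C mi pl a b \<Longrightarrow> preceq C mi pl b c \<Longrightarrow> preceq C mi pl a c"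
  unfolding preceq_def by simp

lemma preceq_prec_trans:
  "preceq C mi pl a b \<Longrightarrow> b \<in> C \<Longrightarrow> c \<in> C \<Longrightarrow> y \<in> pl b \<Longrightarrow> y \<in> mi c \<Longrightarrow> preceq C mi pl a c"
  using preceq_trans prec_preceq by blast

lemma sminus_mi_disjoint_splus_pl: "x \<in> C \<Longrightarrow> sminus mi (mi x) \<inter> splus pl (pl x) = {}"
proof (intro equalityI subsetI; clarsimp)
  fix y a b assume x: "x \<in> C" and a: "a \<in> mi x" "y \<in> mi a" and b: "b \<in> pl x" "y \<in> pl b"
  have "a \<in> C" "b \<in> C" using a(1) b(1) mi_subset[OF x] pl_subset[OF x] by auto
  with faces_not_preceq(2)[OF x a(1) b(1)] show False using prec_preceq a(2) b(2) by blast
qed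

lemma splus_mi_disjoint_sminus_pl: "x \<in> C \<Longrightarrow> splus pl (mi x) \<inter> sminus mi (pl x) = {}"
proof (intro equalityI subsetI; clarsimp)
  fix y a b assume x: "x \<in> C" and a: "a \<in> mi x" "y \<in> pl a" and b: "b \<in> pl x" "y \<in> mi b"
  have "a \<in> C" "b \<in> C" using a(1) b(1) mi_subset[OF x] pl_subset[OF x] by auto
  with faces_not_preceq(1)[OF x a(1) b(1)] show False using prec_preceq a(2) b(2) by blast
qed

lemma exists_maximal:
  assumes "finite S" "S \<noteq> {}" "S \<subseteq> C"
  shows "\<exists>g\<in>S. \<forall>e\<in>S. pl g \<inter> mi e = {}"
proof -
  define r where "r = {(e, g). g \<in> S \<and> e \<in> S \<and> pl g \<inter> mi e \<noteq> {}}"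
  have "finite r" using assms(1) finite_subset[of r "S \<times> S"] unfolding r_def by auto
  have r_preceq: "preceq C mi pl g e" if "(e, g) \<in> r" for e g
    using that assms(3) prec_preceq unfolding r_def by blast
  have "acyclic r"
  proof (rule acyclicI, intro allI notI)
    fix a assume "(a, a) \<in> r\<^sup>+"
    then obtain b where ab: "(a, b) \<in> r" and ba: "(b, a) \<in> r\<^sup>*" by (meson tranclD)
    have "preceq C mi pl a b" using ba
    proof (induction rule: rtrancl_induct)
      case base
      show ?case by (simp add: preceq_def)
    next
      case (step y z)
      then show ?case using preceq_trans r_preceq by blast
    qed
    moreover have "a \<in> C" "b \<in> C" using ab assms(3) unfolding r_def by auto
    ultimately have "a = b" using preceq_antisym r_preceq[OF ab] by blast
    then show False using ab mi_pl_disjoint[of a] \<open>a \<in> C\<close> unfolding r_def by auto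
  qed
  with \<open>finite r\<close> have "wf r" by (rule finite_acyclic_wf)
  then obtain g where "g \<in> S" "\<forall>e. (e, g) \<in> r \<longrightarrow> e \<notin> S"
    using assms(2) unfolding wf_eq_minimal by blast
  then show ?thesis unfolding r_def by blast
qed

section \<open>Cells, grade by grade\<close>

lemma sminus_grade: "S \<subseteq> C \<Longrightarrow> sminus mi (grade dim S (Suc j)) = grade dim (sminus mi S) j"
  using dim_mi by (auto simp: subset_iff) fastforce+

lemma splus_grade: "S \<subseteq> C \<Longrightarrow> splus pl (grade dim S (Suc j)) = grade dim (splus pl S) j"
  using dim_pl by (auto simp: subset_iff) fastforce+

lemma moves_iff_grades:
  assumes "S \<subseteq> C"
  shows "moves mi pl S M P \<longleftrightarrow> (\<forall>j. moves mi pl (grade dim S (Suc j)) (grade dim M j) (grade dim P j))"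
  unfolding moves_def sminus_grade[OF assms] splus_grade[OF assms]
proof (intro iffI allI conjI; (elim conjE)?)
  fix j assume M: "M = P \<union> sminus mi S - splus pl S" and P: "P = M \<union> splus pl S - sminus mi S"
  show "grade dim M j = grade dim P j \<union> grade dim (sminus mi S) j - grade dim (splus pl S) j"
    by (subst M) simp
  show "grade dim P j = grade dim M j \<union> grade dim (splus pl S) j - grade dim (sminus mi S) j"
    by (subst P) simp
next
  assume H: "\<forall>j. grade dim M j = grade dim P j \<union> grade dim (sminus mi S) j - grade dim (splus pl S) j \<and>
                 grade dim P j = grade dim M j \<union> grade dim (splus pl S) j - grade dim (sminus mi S) j"
  show "M = P \<union> sminus mi S - splus pl S" "P = M \<union> splus pl S - sminus mi S"
    by (rule grades_eqI, unfold grade_Un grade_Diff, use H in blast)+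
qed

lemma cell_iff_grades:
  "cell C dim mi pl M P \<longleftrightarrow>
     M \<subseteq> C \<and> P \<subseteq> C \<and> M \<noteq> {} \<and> P \<noteq> {} \<and> finite M \<and> finite P \<and>
     (\<forall>j. well_formed dim mi pl (grade dim M j) \<and> well_formed dim mi pl (grade dim P j) \<and>
          moves mi pl (grade dim M (Suc j)) (grade dim M j) (grade dim P j) \<and>
          moves mi pl (grade dim P (Suc j)) (grade dim M j) (grade dim P j))"
proof (cases "M \<subseteq> C \<and> P \<subseteq> C")
  case True
  then show ?thesis
    unfolding cell_def well_formed_iff_grades[of dim mi pl M] well_formed_iff_grades[of dim mi pl P]
      moves_iff_grades[of M, OF conjunct1[OF True]] moves_iff_grades[of P, OF conjunct2[OF True]]
      all_conj_distrib
    by blast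
next
  case False
  then show ?thesis unfolding cell_def by blast
qed

lemma n_cell_dim_le: "n_cell C dim mi pl n M P \<Longrightarrow> z \<in> M \<union> P \<Longrightarrow> dim z \<le> n"
  unfolding n_cell_def by auto

lemma n_cellI_grades:
  assumes "M \<subseteq> C" "P \<subseteq> C" "finite M" "finite P" "M \<noteq> {}" "P \<noteq> {}" "\<forall>z\<in>M \<union> P. dim z \<le> n"
    and "\<And>j. well_formed dim mi pl (grade dim M j)" "\<And>j. well_formed dim mi pl (grade dim P j)"
    and "\<And>j. moves mi pl (grade dim M (Suc j)) (grade dim M j) (grade dim P j) \<and>
              moves mi pl (grade dim P (Suc j)) (grade dim M j) (grade dim P j)"
  shows "n_cell C dim mi pl n M P"
proof -
  have "cell C dim mi pl M P" unfolding cell_iff_grades using assms(1-6,8-10) by blast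
  moreover have "skel dim (M \<union> P) (int n) = M \<union> P" using assms(7) by auto
  ultimately show ?thesis unfolding n_cell_def by blast
qed

lemma n_cell_grades_above: "n_cell C dim mi pl n M P \<Longrightarrow> n < j \<Longrightarrow> grade dim M j = {} \<and> grade dim P j = {}"
  using n_cell_dim_le by fastforce

lemma n_cell_top_eq:
  assumes "n_cell C dim mi pl n M P"
  shows "grade dim M n = grade dim P n"
proof -
  have "moves mi pl (grade dim M (Suc n)) (grade dim M n) (grade dim P n)"
    using assms cell_iff_grades unfolding n_cell_def by blast
  then show ?thesis using n_cell_grades_above[OF assms, of "Suc n"] by simp
qed

lemma cell_grade_nonempty:
  assumes "cell C dim mi pl M P" "grade dim M (Suc k) \<noteq> {}"
  shows "grade dim P k \<noteq> {}"
proof -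
  let ?A = "grade dim M (Suc k)"
  have "?A \<subseteq> C" "finite ?A"
    using assms(1) finite_subset[OF grade_subset] unfolding cell_def by auto
  then obtain g where g: "g \<in> ?A" and max: "\<forall>e\<in>?A. pl g \<inter> mi e = {}"
    using exists_maximal assms(2) by meson
  have "g \<in> C" "dim g = Suc k" using g \<open>?A \<subseteq> C\<close> by auto
  then obtain y where y: "y \<in> pl g" using pl_nonempty[of g] by auto
  have "moves mi pl ?A (grade dim M k) (grade dim P k)" using assms(1) cell_iff_grades by blast
  then have "grade dim P k = (grade dim M k \<union> splus pl ?A) - sminus mi ?A" unfolding moves_def by blast
  moreover have "y \<in> splus pl ?A" "y \<notin> sminus mi ?A" using g y max by auto
  ultimately show ?thesis by blast
qed

lemma n_cell_replace_top:
  assumes cell: "cell C dim mi pl M P"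
    and A: "A \<subseteq> grade dim C n" "finite A" "A \<noteq> {}" "well_formed dim mi pl A"
    and moves_A: "\<And>j. n = Suc j \<Longrightarrow> moves mi pl A (grade dim M j) (grade dim P j)"
  shows "n_cell C dim mi pl n (skel dim M (int n - 1) \<union> A) (skel dim P (int n - 1) \<union> A)"
proof -
  define M' where "M' = skel dim M (int n - 1) \<union> A"
  define P' where "P' = skel dim P (int n - 1) \<union> A"
  have dim_A: "\<forall>a\<in>A. dim a = n" using A(1) by auto
  have grade_M': "grade dim M' j = (if j < n then grade dim M j else if j = n then A else {})" for j
    unfolding M'_def using dim_A by (rule grade_skel_Un)
  have grade_P': "grade dim P' j = (if j < n then grade dim P j else if j = n then A else {})" for j
    unfolding P'_def using dim_A by (rule grade_skel_Un)
  have grades: "well_formed dim mi pl (grade dim M j) \<and> well_formed dim mi pl (grade dim P j) \<and>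
      moves mi pl (grade dim M (Suc j)) (grade dim M j) (grade dim P j) \<and>
      moves mi pl (grade dim P (Suc j)) (grade dim M j) (grade dim P j)" for j
    using cell cell_iff_grades by blast
  have moves': "moves mi pl (grade dim M' (Suc j)) (grade dim M' j) (grade dim P' j) \<and>
      moves mi pl (grade dim P' (Suc j)) (grade dim M' j) (grade dim P' j)" for j
  proof -
    consider "Suc j < n" | "Suc j = n" | "n \<le> j" by linarith
    then show ?thesis
    proof cases
      case 1
      then show ?thesis using grades[of j] by (simp add: grade_M' grade_P')
    next
      case 2
      then show ?thesis using moves_A[of j] by (simp add: grade_M' grade_P')
    next
      case 3
      then show ?thesis by (simp add: grade_M' grade_P')
    qed
  qed
  show ?thesis unfolding M'_def[symmetric] P'_def[symmetric]
  proof (rule n_cellI_grades)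
    have sub: "M' \<subseteq> M \<union> A" "P' \<subseteq> P \<union> A" "A \<subseteq> M'" "A \<subseteq> P'"
      unfolding M'_def P'_def by auto
    have "A \<subseteq> C" using A(1) grade_subset by (rule order_trans)
    moreover have "M \<subseteq> C" "P \<subseteq> C" "finite M" "finite P" using cell unfolding cell_def by auto
    ultimately show "M' \<subseteq> C" "P' \<subseteq> C" "finite M'" "finite P'"
      using sub A(2) finite_subset[OF sub(1)] finite_subset[OF sub(2)] by auto
    show "M' \<noteq> {}" "P' \<noteq> {}" using sub A(3) by auto
    show "\<forall>z\<in>M' \<union> P'. dim z \<le> n" unfolding M'_def P'_def using dim_A by auto
    show "well_formed dim mi pl (grade dim M' j)" "well_formed dim mi pl (grade dim P' j)" for j
      using grades[of j] A(4) by (simp_all add: grade_M' grade_P')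
  qed (rule moves')
qed

lemma n_cell_target:
  assumes cell: "cell C dim mi pl M P" and "grade dim M (Suc k) \<noteq> {}"
  shows "n_cell C dim mi pl k (skel dim M (int k - 1) \<union> grade dim P k) (skel dim P (int k - 1) \<union> grade dim P k)"
proof (rule n_cell_replace_top[OF cell])
  have "P \<subseteq> C" "finite P" "well_formed dim mi pl P" using cell unfolding cell_def by auto
  then show "grade dim P k \<subseteq> grade dim C k" "finite (grade dim P k)" "well_formed dim mi pl (grade dim P k)"
    using finite_subset[OF grade_subset] well_formed_subset[OF _ grade_subset] by auto
  show "grade dim P k \<noteq> {}" using cell_grade_nonempty[OF assms] .
  show "moves mi pl (grade dim P k) (grade dim M j) (grade dim P j)" if "k = Suc j" for j
    using cell that by (simp add: cell_iff_grades)
qed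

lemma n_cell_add_top:
  assumes MP: "n_cell C dim mi pl n M P" and MP': "n_cell C dim mi pl n M' P'"
    and skel_M: "skel dim M' (int n - 1) = skel dim M (int n - 1)"
    and skel_P: "skel dim P' (int n - 1) = skel dim P (int n - 1)"
    and X: "X \<subseteq> grade dim C (Suc n)" "well_formed dim mi pl X" "finite X"
    and moves_X: "moves mi pl X (grade dim M' n) (grade dim M n)"
  shows "n_cell C dim mi pl (Suc n) (M' \<union> X) (P \<union> X)"
proof -
  have dim_X: "\<forall>a\<in>X. dim a = Suc n" using X(1) by auto
  have low: "grade dim M' j = grade dim M j" "grade dim P' j = grade dim P j" if "j < n" for j
    using that arg_cong[OF skel_M, of "\<lambda>S. grade dim S j"] arg_cong[OF skel_P, of "\<lambda>S. grade dim S j"]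
    by simp_all
  have above: "grade dim M' j = {}" "grade dim P j = {}" if "n < j" for j
    using that n_cell_grades_above[OF MP'] n_cell_grades_above[OF MP] by blast+
  have grade_M2: "grade dim (M' \<union> X) j = (if j = Suc n then X else grade dim M' j)" for j
    using above(1)[of "Suc n"] dim_X by auto
  have grade_P2: "grade dim (P \<union> X) j = (if j = Suc n then X else grade dim P j)" for j
    using above(2)[of "Suc n"] dim_X by auto
  have top: "grade dim P n = grade dim M n" using n_cell_top_eq[OF MP] by simp
  have cM: "cell C dim mi pl M P" and cM': "cell C dim mi pl M' P'"
    using MP MP' unfolding n_cell_def by auto
  have grades: "moves mi pl (grade dim M (Suc j)) (grade dim M j) (grade dim P j) \<and>
      moves mi pl (grade dim P (Suc j)) (grade dim M j) (grade dim P j)" for j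
    using cM by (simp add: cell_iff_grades)
  have grades': "moves mi pl (grade dim M' (Suc j)) (grade dim M' j) (grade dim P' j)" for j
    using cM' by (simp add: cell_iff_grades)
  have wf: "well_formed dim mi pl (grade dim M' j)" "well_formed dim mi pl (grade dim P j)" for j
    using cM cM' by (simp_all add: cell_iff_grades)
  have moves2: "moves mi pl (grade dim (M' \<union> X) (Suc j)) (grade dim (M' \<union> X) j) (grade dim (P \<union> X) j) \<and>
      moves mi pl (grade dim (P \<union> X) (Suc j)) (grade dim (M' \<union> X) j) (grade dim (P \<union> X) j)" for j
  proof -
    consider "Suc j < n" | "Suc j = n" | "j = n" | "Suc n \<le> j" by linarith
    then show ?thesis
    proof cases
      case 1
      then show ?thesis using grades[of j] by (simp add: grade_M2 grade_P2 low del: grade_Un)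
    next
      case 2
      then show ?thesis using grades[of j] grades'[of j] by (simp add: grade_M2 grade_P2 low del: grade_Un)
    next
      case 3
      then show ?thesis using moves_X by (simp add: grade_M2 grade_P2 top del: grade_Un)
    next
      case 4
      then show ?thesis by (simp add: grade_M2 grade_P2 above del: grade_Un)
    qed
  qed
  show ?thesis
  proof (rule n_cellI_grades)
    have "X \<subseteq> C" using X(1) grade_subset by (rule order_trans)
    then show "M' \<union> X \<subseteq> C" "P \<union> X \<subseteq> C" "finite (M' \<union> X)" "finite (P \<union> X)"
        "M' \<union> X \<noteq> {}" "P \<union> X \<noteq> {}"
      using cM cM' X(3) unfolding cell_def by auto
    show "\<forall>z\<in>(M' \<union> X) \<union> (P \<union> X). dim z \<le> Suc n"
      using n_cell_dim_le[OF MP] n_cell_dim_le[OF MP'] dim_X by fastforce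
    show "well_formed dim mi pl (grade dim (M' \<union> X) j)" "well_formed dim mi pl (grade dim (P \<union> X) j)" for j
      using wf[of j] X(2) by (simp_all add: grade_M2 grade_P2 del: grade_Un)
  qed (rule moves2)
qed

section \<open>Moving a cell back along a set of higher cells\<close>

lemma n_cell_move_back_single_0:
  assumes MP: "n_cell C dim mi pl 0 M P" and x: "x \<in> C" "dim x = Suc 0" and plx: "pl x \<subseteq> grade dim M 0"
  shows "mi x \<inter> grade dim M 0 = {} \<and>
    n_cell C dim mi pl 0 (skel dim M (int 0 - 1) \<union> move_back mi pl {x} (grade dim M 0))
                         (skel dim P (int 0 - 1) \<union> move_back mi pl {x} (grade dim M 0))"
proof -
  have cell: "cell C dim mi pl M P" using MP unfolding n_cell_def by blast
  then have "well_formed dim mi pl M" unfolding cell_def by blast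
  then have single: "a = b" if "a \<in> grade dim M 0" "b \<in> grade dim M 0" for a b
    using that unfolding well_formed_def by auto
  obtain b where "b \<in> pl x" using pl_nonempty x by fastforce
  then have top: "grade dim M 0 = pl x" using single plx by blast
  have disj: "mi x \<inter> pl x = {}" using mi_pl_disjoint x(1) .
  then have "move_back mi pl {x} (grade dim M 0) = mi x" unfolding top move_back_def by auto
  moreover have "n_cell C dim mi pl 0 (skel dim M (int 0 - 1) \<union> mi x) (skel dim P (int 0 - 1) \<union> mi x)"
  proof (rule n_cell_replace_top[OF cell])
    show "mi x \<subseteq> grade dim C 0" using x dim_mi mi_subset by fastforce
    show "finite (mi x)" "mi x \<noteq> {}" "well_formed dim mi pl (mi x)"
      using x finite_mi mi_nonempty well_formed_mi by auto
  qed simp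
  ultimately show ?thesis using top disj by auto
qed

context
  fixes k M P x
  assumes MP: "n_cell C dim mi pl (Suc k) M P"
    and x: "x \<in> C" "dim x = Suc (Suc k)" "pl x \<subseteq> grade dim M (Suc k)"
    and internal: "sminus mi (mi x) \<inter> splus pl (mi x) \<inter>
        (grade dim M k \<union> grade dim P k \<union> sminus mi (grade dim M (Suc k)) \<union> splus pl (grade dim M (Suc k))) = {}"
begin

private lemma top_faces_disjoint:
  "a \<in> grade dim M (Suc k) \<Longrightarrow> b \<in> grade dim M (Suc k) \<Longrightarrow> a \<noteq> b \<Longrightarrow> mi a \<inter> mi b = {} \<and> pl a \<inter> pl b = {}"
  using MP well_formedD[of dim mi pl M a b] unfolding n_cell_def cell_def by auto

private lemma rest_orth_pl: "orth mi pl (grade dim M (Suc k) - pl x) (pl x)"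
proof (rule well_formed_orth_Diff[where n = "Suc k"])
  show "well_formed dim mi pl (grade dim M (Suc k))"
    using MP well_formed_subset[OF _ grade_subset] unfolding n_cell_def cell_def by blast
qed (use x(3) in auto)

lemma mi_disjoint_top: "mi x \<inter> grade dim M (Suc k) = {}"
proof (rule ccontr)
  assume "mi x \<inter> grade dim M (Suc k) \<noteq> {}"
  then obtain a where a: "a \<in> mi x" "a \<in> grade dim M (Suc k)" by blast
  have "a \<in> C" "dim a = Suc k" using a x(1,2) mi_subset dim_mi by auto
  then obtain y where y: "y \<in> pl a" using pl_nonempty[of a] by auto
  then have "y \<in> splus pl (mi x)" "y \<in> splus pl (grade dim M (Suc k))" using a by auto
  then have "y \<notin> sminus mi (mi x)" using internal by blast
  then have "y \<in> splus pl (pl x)" using faces_parity[OF x(1)] \<open>y \<in> splus pl (mi x)\<close> by blast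
  then obtain b where b: "b \<in> pl x" "y \<in> pl b" by auto
  have "a \<noteq> b" using a(1) b(1) mi_pl_disjoint[OF x(1)] by blast
  then show False using top_faces_disjoint[OF a(2) _ \<open>a \<noteq> b\<close>] b x(3) y by blast
qed

lemma move_back_single_eq:
  "move_back mi pl {x} (grade dim M (Suc k)) = (grade dim M (Suc k) - pl x) \<union> mi x"
  using mi_pl_disjoint[OF x(1)] unfolding move_back_def by auto

private lemma rest_orth_mi: "orth mi pl (grade dim M (Suc k) - pl x) (mi x)"
  unfolding orth_def
proof (intro conjI equalityI subsetI)
  fix y assume y: "y \<in> sminus mi (grade dim M (Suc k) - pl x) \<inter> sminus mi (mi x)"
  then have top: "y \<in> sminus mi (grade dim M (Suc k))" by auto
  show "y \<in> {}"
  proof (cases "y \<in> splus pl (mi x)")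
    case True
    then show ?thesis using y top internal by blast
  next
    case False
    then have "y \<in> sminus mi (pl x)" using y faces_parity[OF x(1)] by blast
    then show ?thesis using y rest_orth_pl unfolding orth_def by blast
  qed
next
  fix y assume y: "y \<in> splus pl (grade dim M (Suc k) - pl x) \<inter> splus pl (mi x)"
  then have "y \<in> splus pl (grade dim M (Suc k))" by auto
  then have "y \<notin> sminus mi (mi x)" using y internal by blast
  then have "y \<in> splus pl (pl x)" using y faces_parity[OF x(1)] by blast
  then show "y \<in> {}" using y rest_orth_pl unfolding orth_def by blast
qed simp_all

lemma well_formed_move_back_single: "well_formed dim mi pl (move_back mi pl {x} (grade dim M (Suc k)))"
  unfolding move_back_single_eq
proof (rule well_formed_Un)
  have "grade dim M (Suc k) - pl x \<subseteq> M" by auto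
  then show "well_formed dim mi pl (grade dim M (Suc k) - pl x)"
    using MP well_formed_subset[of dim mi pl M] unfolding n_cell_def cell_def by blast
  show "well_formed dim mi pl (mi x)" using well_formed_mi[OF x(1)] .
  show "\<forall>a\<in>grade dim M (Suc k) - pl x \<union> mi x. 0 < dim a" using dim_mi x(1,2) by auto
  show "sminus mi (grade dim M (Suc k) - pl x) \<inter> sminus mi (mi x) = {}"
    "splus pl (grade dim M (Suc k) - pl x) \<inter> splus pl (mi x) = {}"
    using rest_orth_mi unfolding orth_def by blast+
qed

lemma moves_move_back_single:
  "moves mi pl (move_back mi pl {x} (grade dim M (Suc k))) (grade dim M k) (grade dim P k)"
proof -
  let ?A = "grade dim M (Suc k)" and ?B = "grade dim M (Suc k) - pl x"
  have "moves mi pl ?A (grade dim M k) (grade dim P k)"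
    using MP unfolding n_cell_def cell_iff_grades by blast
  then have U: "\<And>y. y \<in> grade dim M k \<longleftrightarrow> (y \<in> grade dim P k \<or> y \<in> sminus mi ?A) \<and> y \<notin> splus pl ?A"
    and V: "\<And>y. y \<in> grade dim P k \<longleftrightarrow> (y \<in> grade dim M k \<or> y \<in> splus pl ?A) \<and> y \<notin> sminus mi ?A"
    unfolding moves_def by blast+
  have A_mi: "y \<in> sminus mi ?A \<longleftrightarrow> y \<in> sminus mi ?B \<or> y \<in> sminus mi (pl x)"
    and A_pl: "y \<in> splus pl ?A \<longleftrightarrow> y \<in> splus pl ?B \<or> y \<in> splus pl (pl x)" for y
    using x(3) by auto
  have A'_mi: "y \<in> sminus mi (?B \<union> mi x) \<longleftrightarrow> y \<in> sminus mi ?B \<or> y \<in> sminus mi (mi x)"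
    and A'_pl: "y \<in> splus pl (?B \<union> mi x) \<longleftrightarrow> y \<in> splus pl ?B \<or> y \<in> splus pl (mi x)" for y
    by auto
  have inner: "\<not> (y \<in> sminus mi (mi x) \<and> y \<in> splus pl (mi x) \<and>
      (y \<in> grade dim M k \<or> y \<in> grade dim P k \<or> y \<in> sminus mi ?A \<or> y \<in> splus pl ?A))" for y
    using internal by blast
  have parity: "y \<in> splus pl (pl x) \<or> y \<in> sminus mi (mi x) \<longleftrightarrow> y \<in> splus pl (mi x) \<or> y \<in> sminus mi (pl x)"
    for y using faces_parity[OF x(1)] by blast
  have d1: "\<not> (y \<in> sminus mi (mi x) \<and> y \<in> splus pl (pl x))"
    and d2: "\<not> (y \<in> splus pl (mi x) \<and> y \<in> sminus mi (pl x))" for y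
    using sminus_mi_disjoint_splus_pl[OF x(1)] splus_mi_disjoint_sminus_pl[OF x(1)] by blast+
  have orth: "\<not> (y \<in> sminus mi ?B \<and> y \<in> sminus mi (pl x))" "\<not> (y \<in> splus pl ?B \<and> y \<in> splus pl (pl x))"
    for y using rest_orth_pl unfolding orth_def by blast+
  show ?thesis unfolding moves_def move_back_single_eq set_eq_iff Un_iff Diff_iff
  proof (intro allI conjI)
    fix y
    show "y \<in> grade dim M k \<longleftrightarrow> (y \<in> grade dim P k \<or> y \<in> sminus mi (?B \<union> mi x)) \<and> y \<notin> splus pl (?B \<union> mi x)"
      unfolding A'_mi A'_pl using U[of y] V[of y] A_mi[of y] A_pl[of y] inner[of y] parity[of y] d1[of y] d2[of y] orth[of y]
      by blast
    show "y \<in> grade dim P k \<longleftrightarrow> (y \<in> grade dim M k \<or> y \<in> splus pl (?B \<union> mi x)) \<and> y \<notin> sminus mi (?B \<union> mi x)"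
      unfolding A'_mi A'_pl using U[of y] V[of y] A_mi[of y] A_pl[of y] inner[of y] parity[of y] d1[of y] d2[of y] orth[of y]
      by blast
  qed
qed

lemma n_cell_move_back_single_Suc:
  "mi x \<inter> grade dim M (Suc k) = {} \<and>
    n_cell C dim mi pl (Suc k) (skel dim M (int (Suc k) - 1) \<union> move_back mi pl {x} (grade dim M (Suc k)))
                               (skel dim P (int (Suc k) - 1) \<union> move_back mi pl {x} (grade dim M (Suc k)))"
proof
  show "mi x \<inter> grade dim M (Suc k) = {}" by (rule mi_disjoint_top)
  have cell: "cell C dim mi pl M P" using MP unfolding n_cell_def by blast
  show "n_cell C dim mi pl (Suc k) (skel dim M (int (Suc k) - 1) \<union> move_back mi pl {x} (grade dim M (Suc k)))
                               (skel dim P (int (Suc k) - 1) \<union> move_back mi pl {x} (grade dim M (Suc k)))"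
  proof (rule n_cell_replace_top[OF cell])
    have "M \<subseteq> C" "finite M" using cell unfolding cell_def by auto
    moreover have "mi x \<subseteq> grade dim C (Suc k)" using x(1,2) mi_subset[OF x(1)] dim_mi by fastforce
    ultimately show "move_back mi pl {x} (grade dim M (Suc k)) \<subseteq> grade dim C (Suc k)"
      unfolding move_back_single_eq by auto
    show "finite (move_back mi pl {x} (grade dim M (Suc k)))"
      unfolding move_back_single_eq
      using \<open>finite M\<close> finite_mi[OF x(1)] finite_subset[OF grade_subset] by blast
    show "move_back mi pl {x} (grade dim M (Suc k)) \<noteq> {}"
      unfolding move_back_single_eq using mi_nonempty x(1,2) by auto
  qed (use well_formed_move_back_single moves_move_back_single in auto)
qed

end

lemma dim_move_back:
  "X \<subseteq> grade dim C (Suc n) \<Longrightarrow> \<forall>a\<in>move_back mi pl X (grade dim S n). dim a = n"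
  using dim_mi unfolding move_back_def by (fastforce simp: subset_iff)

lemma n_cell_move_back_of_single:
  assumes single: "\<And>M P x. n_cell C dim mi pl n M P \<Longrightarrow> x \<in> C \<Longrightarrow> dim x = Suc n \<Longrightarrow> pl x \<subseteq> grade dim M n \<Longrightarrow>
      mi x \<inter> grade dim M n = {} \<and>
      n_cell C dim mi pl n (skel dim M (int n - 1) \<union> move_back mi pl {x} (grade dim M n))
                           (skel dim P (int n - 1) \<union> move_back mi pl {x} (grade dim M n))"
    and "n_cell C dim mi pl n M P" "X \<subseteq> grade dim C (Suc n)" "well_formed dim mi pl X" "finite X"
    and "spm mi pl X \<subseteq> grade dim M n"
  shows "sminus mi X \<inter> grade dim M n = {} \<and>
    n_cell C dim mi pl n (skel dim M (int n - 1) \<union> move_back mi pl X (grade dim M n))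
                         (skel dim P (int n - 1) \<union> move_back mi pl X (grade dim M n))"
  using assms(5,2,3,4,6)
proof (induction X arbitrary: M P rule: finite_remove_induct)
  case empty
  have "skel dim M (int n - 1) \<union> grade dim M n = M" "skel dim P (int n - 1) \<union> grade dim M n = P"
    using n_cell_dim_le[OF empty.prems(1)] n_cell_top_eq[OF empty.prems(1)] by force+
  then show ?case using empty.prems(1) by simp
next
  case (remove X)
  note MP = remove.prems(1) and X = remove.prems(2-4)
  have "X \<subseteq> C" using X(1) grade_subset by (rule order_trans)
  then obtain x where x: "x \<in> X" and max: "\<forall>e\<in>X. pl x \<inter> mi e = {}"
    using exists_maximal remove.hyps(1,2) by meson
  have xC: "x \<in> C" "dim x = Suc n" using x X(1) by (auto simp: subset_iff)
  have plx_disj: "pl x \<inter> sminus mi X = {}" using max by (auto simp: disjoint_iff)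
  then have "pl x \<subseteq> spm mi pl X" using x unfolding spm_def by (auto simp: disjoint_iff)
  then have plx: "pl x \<subseteq> grade dim M n" using X(3) by (rule order_trans)
  define A' where "A' = move_back mi pl {x} (grade dim M n)"
  define M1 where "M1 = skel dim M (int n - 1) \<union> A'"
  define P1 where "P1 = skel dim P (int n - 1) \<union> A'"
  have step: "mi x \<inter> grade dim M n = {}" "n_cell C dim mi pl n M1 P1"
    using single[OF MP xC plx] unfolding M1_def P1_def A'_def by blast+
  have "{x} \<subseteq> grade dim C (Suc n)" using xC by simp
  note dim_A' = dim_move_back[OF this, of M, folded A'_def]
  have grade_M1: "grade dim M1 n = A'" unfolding M1_def by (rule grade_skel_Un_top[OF dim_A'])
  have skel1: "skel dim M1 (int n - 1) = skel dim M (int n - 1)" "skel dim P1 (int n - 1) = skel dim P (int n - 1)"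
    unfolding M1_def P1_def using skel_skel_Un_top[OF dim_A'] by blast+
  have "\<forall>a\<in>X. dim a = Suc n" using X(1) by auto
  note spm_rest = spm_remove_subset_move_back[OF X(2) this x X(3), folded A'_def]
  have "X - {x} \<subseteq> grade dim C (Suc n)" "well_formed dim mi pl (X - {x})"
    using X(1) well_formed_subset[OF X(2)] by auto
  note IH = remove.IH[OF x step(2) this spm_rest[folded grade_M1]]
  have plx_rest: "pl x \<inter> sminus mi (X - {x}) = {}" using plx_disj by (auto simp: disjoint_iff)
  have "move_back mi pl (X - {x}) A' = move_back mi pl X (grade dim M n)"
    unfolding A'_def using x plx_rest by (rule move_back_remove)
  moreover have "sminus mi X \<inter> grade dim M n = {}"
    using sminus_disjoint_remove[where mi = mi and pl = pl, OF x plx_rest step(1)] IH unfolding A'_def grade_M1 by blast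
  ultimately show ?case using IH unfolding skel1 grade_M1 by simp
qed

section \<open>Internal faces in receptive parity complexes\<close>

lemma paths_avoid_faces:
  assumes x: "x \<in> C" and z: "z \<in> sminus mi (mi x)" "z \<in> splus pl (mi x)"
    and gh: "g \<in> C" "h \<in> C" "h \<in> pl x \<or> z \<in> mi h" "preceq C mi pl h g"
  shows "z \<notin> pl g" "pl g \<inter> sminus mi (pl x) \<inter> sminus mi (mi x) = {}"
proof -
  obtain c where c: "c \<in> mi x" "z \<in> pl c" using z(2) by auto
  obtain d where d: "d \<in> mi x" "z \<in> mi d" using z(1) by auto
  have cd: "c \<in> C" "d \<in> C" using c(1) d(1) mi_subset[OF x] by auto
  show "z \<notin> pl g"
  proof
    assume zg: "z \<in> pl g"
    show False using gh(3)
    proof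
      assume "h \<in> pl x"
      moreover have "preceq C mi pl h d" using preceq_prec_trans[OF gh(4) gh(1) cd(2) zg d(2)] .
      ultimately show False using faces_not_preceq(2)[OF x d(1)] by blast
    next
      assume "z \<in> mi h"
      then have "preceq C mi pl g h" using prec_preceq gh(1,2) zg by blast
      then have "g = h" using preceq_antisym gh by blast
      then show False using mi_pl_disjoint[OF gh(1)] zg \<open>z \<in> mi h\<close> by blast
    qed
  qed
  show "pl g \<inter> sminus mi (pl x) \<inter> sminus mi (mi x) = {}"
  proof (rule equals0I)
    fix w assume "w \<in> pl g \<inter> sminus mi (pl x) \<inter> sminus mi (mi x)"
    then obtain b d' where w: "w \<in> pl g" "b \<in> pl x" "w \<in> mi b" "d' \<in> mi x" "w \<in> mi d'" by auto
    have bd': "b \<in> C" "d' \<in> C" using w(2,4) mi_subset[OF x] pl_subset[OF x] by auto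
    show False using gh(3)
    proof
      assume "h \<in> pl x"
      moreover have "preceq C mi pl h d'" using preceq_prec_trans[OF gh(4) gh(1) bd'(2) w(1,5)] .
      ultimately show False using faces_not_preceq(2)[OF x w(4)] by blast
    next
      assume "z \<in> mi h"
      then have "preceq C mi pl c g" using prec_preceq[OF cd(1) gh(2) c(2)] preceq_trans gh(4) by blast
      then have "preceq C mi pl c b" using preceq_prec_trans gh(1) bd'(1) w(1,3) by blast
      then show False using faces_not_preceq(1)[OF x c(1) w(2)] by blast
    qed
  qed
qed

definition upper_set :: "'a set \<Rightarrow> 'a set \<Rightarrow> 'a set" where
  "upper_set A T = {g \<in> A. \<exists>h\<in>T. preceq C mi pl h g}"

lemma upper_set_subset: "upper_set A T \<subseteq> A"
  unfolding upper_set_def by blast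

lemma subset_upper_set: "T \<subseteq> A \<Longrightarrow> T \<subseteq> upper_set A T"
  by (auto simp: upper_set_def preceq_def)

lemma spm_upper_set: "A \<subseteq> C \<Longrightarrow> spm mi pl (upper_set A T) \<subseteq> splus pl A - sminus mi A"
proof (rule spm_upward_closed[OF upper_set_subset])
  fix g e y assume A: "A \<subseteq> C" and g: "g \<in> upper_set A T" and e: "e \<in> A" "y \<in> pl g" "y \<in> mi e"
  then obtain h where h: "h \<in> T" "preceq C mi pl h g" "g \<in> A" unfolding upper_set_def by blast
  have "preceq C mi pl h e" using preceq_prec_trans[OF h(2) _ _ e(2,3)] A h(3) e(1) by blast
  then show "e \<in> upper_set A T" using h(1) e(1) unfolding upper_set_def by blast
qed

lemma upper_set_internal_face:
  assumes A: "A \<subseteq> C" "moves mi pl A U V" and x: "x \<in> C" "pl x \<subseteq> A"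
    and z: "z \<in> sminus mi (mi x)" "z \<in> splus pl (mi x)" "z \<in> U \<union> V \<union> sminus mi A \<union> splus pl A"
  defines "Up \<equiv> upper_set A {h \<in> A. h \<in> pl x \<or> z \<in> mi h}"
  shows "spm mi pl Up \<subseteq> V" "sminus mi (pl x) \<inter> sminus mi (mi x) \<subseteq> move_back mi pl Up V"
    "z \<in> move_back mi pl Up V" "pl x \<subseteq> Up"
proof -
  have "{h \<in> A. h \<in> pl x \<or> z \<in> mi h} \<subseteq> A" by blast
  then have sources_Up: "{h \<in> A. h \<in> pl x \<or> z \<in> mi h} \<subseteq> Up"
    unfolding Up_def by (rule subset_upper_set)
  then show plx_Up: "pl x \<subseteq> Up" using x(2) by blast
  have avoid: "z \<notin> pl g" "pl g \<inter> sminus mi (pl x) \<inter> sminus mi (mi x) = {}" if g: "g \<in> Up" for g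
  proof -
    obtain h where gh: "g \<in> A" "h \<in> A" "h \<in> pl x \<or> z \<in> mi h" "preceq C mi pl h g"
      using g unfolding Up_def upper_set_def by blast
    have "g \<in> C" "h \<in> C" using gh(1,2) A(1) by auto
    then show "z \<notin> pl g" "pl g \<inter> sminus mi (pl x) \<inter> sminus mi (mi x) = {}"
      using paths_avoid_faces[OF x(1) z(1,2) _ _ gh(3,4)] by auto
  qed
  have "spm mi pl Up \<subseteq> splus pl A - sminus mi A" unfolding Up_def using spm_upper_set[OF A(1)] .
  also have "\<dots> \<subseteq> V" using A(2) unfolding moves_def by blast
  finally show "spm mi pl Up \<subseteq> V" .
  show "sminus mi (pl x) \<inter> sminus mi (mi x) \<subseteq> move_back mi pl Up V"
  proof
    fix w assume w: "w \<in> sminus mi (pl x) \<inter> sminus mi (mi x)"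
    then have "w \<in> sminus mi Up" using plx_Up by auto
    moreover have "w \<notin> splus pl Up"
    proof
      assume "w \<in> splus pl Up"
      then obtain g where "g \<in> Up" "w \<in> pl g" by auto
      then show False using avoid(2) w by blast
    qed
    ultimately show "w \<in> move_back mi pl Up V" unfolding move_back_def by auto
  qed
  have "z \<notin> splus pl Up" using avoid(1) by auto
  moreover have "z \<in> V \<or> z \<in> sminus mi Up"
  proof (cases "z \<in> sminus mi A")
    case True
    then obtain g where "g \<in> A" "z \<in> mi g" by auto
    then have "g \<in> Up" using sources_Up by blast
    then show ?thesis using \<open>z \<in> mi g\<close> by auto
  next
    case False
    then show ?thesis using z(3) A(2) unfolding moves_def by blast
  qed
  ultimately show "z \<in> move_back mi pl Up V" unfolding move_back_def by auto
qed

end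

locale receptive_parity_cplx = parity_cplx +
  assumes receptive_cell_source: "\<And>M P. cell C dim mi pl M P \<Longrightarrow> receptive C mi pl M"
begin

lemma internal_faces_disjoint:
  assumes IH: "\<And>M P X. n_cell C dim mi pl k M P \<Longrightarrow> X \<subseteq> grade dim C (Suc k) \<Longrightarrow>
      well_formed dim mi pl X \<Longrightarrow> finite X \<Longrightarrow> spm mi pl X \<subseteq> grade dim M k \<Longrightarrow>
      cell C dim mi pl (skel dim M (int k - 1) \<union> move_back mi pl X (grade dim M k))
                       (skel dim P (int k - 1) \<union> move_back mi pl X (grade dim M k))"
    and MP: "n_cell C dim mi pl (Suc k) M P"
    and x: "x \<in> C" "dim x = Suc (Suc k)" "pl x \<subseteq> grade dim M (Suc k)"
  shows "sminus mi (mi x) \<inter> splus pl (mi x) \<inter>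
      (grade dim M k \<union> grade dim P k \<union> sminus mi (grade dim M (Suc k)) \<union> splus pl (grade dim M (Suc k))) = {}"
proof (rule equals0I)
  let ?A = "grade dim M (Suc k)" and ?V = "grade dim P k"
  fix z assume "z \<in> sminus mi (mi x) \<inter> splus pl (mi x) \<inter> (grade dim M k \<union> ?V \<union> sminus mi ?A \<union> splus pl ?A)"
  then have z: "z \<in> sminus mi (mi x)" "z \<in> splus pl (mi x)" "z \<in> grade dim M k \<union> ?V \<union> sminus mi ?A \<union> splus pl ?A"
    by blast+
  have cell: "cell C dim mi pl M P" using MP unfolding n_cell_def by blast
  then have "M \<subseteq> C" "finite M" "well_formed dim mi pl M" unfolding cell_def by auto
  then have A: "?A \<subseteq> C" "finite ?A" "well_formed dim mi pl ?A"
    using finite_subset[OF grade_subset] well_formed_subset[OF _ grade_subset] by auto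
  have moves_A: "moves mi pl ?A (grade dim M k) ?V" using cell by (simp add: cell_iff_grades)
  define Up where "Up = upper_set ?A {h \<in> ?A. h \<in> pl x \<or> z \<in> mi h}"
  note Up = upper_set_internal_face[OF A(1) moves_A x(1,3) z, folded Up_def]
  have Up_sub: "Up \<subseteq> ?A" unfolding Up_def by (rule upper_set_subset)
  have "?A \<noteq> {}" using x(3) pl_nonempty[OF x(1)] x(2) by auto
  note target = n_cell_target[OF cell this]
  have dim_V: "\<forall>a\<in>?V. dim a = k" by simp
  define R where "R = skel dim M (int k - 1) \<union> move_back mi pl Up ?V"
  have "Up \<subseteq> grade dim C (Suc k)" using Up_sub A(1) by (auto simp: subset_iff)
  moreover have "well_formed dim mi pl Up" "finite Up"
    using well_formed_subset[OF A(3) Up_sub] finite_subset[OF Up_sub A(2)] by auto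
  moreover have "spm mi pl Up \<subseteq> grade dim (skel dim M (int k - 1) \<union> ?V) k"
    using Up(1) grade_skel_Un_top[OF dim_V] by simp
  ultimately have "cell C dim mi pl R (skel dim P (int k - 1) \<union> move_back mi pl Up ?V)"
    using IH[OF target]
    unfolding grade_skel_Un_top[OF dim_V] skel_skel_Un_top[OF dim_V] R_def by blast
  then have "receptive C mi pl R" by (rule receptive_cell_source)
  note receptive_at_x = bspec[OF this[unfolded receptive_def] x(1)]
  have "sminus mi (pl x) \<inter> sminus mi (mi x) \<subseteq> R \<Longrightarrow> R \<inter> splus pl (pl x) = {} \<Longrightarrow>
      R \<inter> splus pl (mi x) = {}"
    using receptive_at_x by blast
  moreover have "sminus mi (pl x) \<inter> sminus mi (mi x) \<subseteq> R" using Up(2) unfolding R_def by blast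
  moreover have "R \<inter> splus pl (pl x) = {}"
  proof (rule equals0I)
    fix y assume y: "y \<in> R \<inter> splus pl (pl x)"
    then obtain b where b: "b \<in> pl x" "y \<in> pl b" by auto
    then have "dim y = k" using x dim_pl pl_subset by fastforce
    moreover have "y \<in> splus pl Up" using b Up(4) by auto
    ultimately show False using y unfolding R_def move_back_def by auto
  qed
  moreover have "z \<in> R" using Up(3) unfolding R_def by blast
  ultimately show False using z(2) by blast
qed

lemma n_cell_move_back:
  assumes "n_cell C dim mi pl n M P" "X \<subseteq> grade dim C (Suc n)" "well_formed dim mi pl X" "finite X"
    and "spm mi pl X \<subseteq> grade dim M n"
  shows "sminus mi X \<inter> grade dim M n = {} \<and>
    n_cell C dim mi pl n (skel dim M (int n - 1) \<union> move_back mi pl X (grade dim M n))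
                         (skel dim P (int n - 1) \<union> move_back mi pl X (grade dim M n))"
  using assms
proof (induction n arbitrary: M P X)
  case 0
  show ?case using n_cell_move_back_of_single[OF n_cell_move_back_single_0 0] by blast
next
  case (Suc k)
  have IH: "cell C dim mi pl (skel dim M (int k - 1) \<union> move_back mi pl X (grade dim M k))
                       (skel dim P (int k - 1) \<union> move_back mi pl X (grade dim M k))"
    if "n_cell C dim mi pl k M P" "X \<subseteq> grade dim C (Suc k)" "well_formed dim mi pl X" "finite X"
      "spm mi pl X \<subseteq> grade dim M k" for M P X
    using Suc.IH[OF that] unfolding n_cell_def by blast
  show ?case
    using n_cell_move_back_of_single[OF n_cell_move_back_single_Suc[OF _ _ _ _ internal_faces_disjoint[OF IH]] Suc.prems]
    by blast
qed

lemma n_cell_move_back_add: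
  assumes MP: "n_cell C dim mi pl n M P" and X: "X \<subseteq> grade dim C (Suc n)" "well_formed dim mi pl X" "finite X"
    and spm: "spm mi pl X \<subseteq> grade dim M n"
  shows "n_cell C dim mi pl (Suc n) (skel dim M (int n - 1) \<union> move_back mi pl X (grade dim M n) \<union> X) (P \<union> X)"
proof -
  let ?Y = "move_back mi pl X (grade dim M n)"
  note B = n_cell_move_back[OF MP X spm]
  note dim_Y = dim_move_back[OF X(1), of M]
  have "moves mi pl X (grade dim (skel dim M (int n - 1) \<union> ?Y) n) (grade dim M n)"
    unfolding grade_skel_Un_top[OF dim_Y] using moves_move_back[OF spm] B by blast
  then show ?thesis
    by (rule n_cell_add_top[OF MP conjunct2[OF B] skel_skel_Un_top[OF dim_Y] skel_skel_Un_top[OF dim_Y] X])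
qed

end

theorem lemma3p2:
  fixes C :: "'a set" and dim :: "'a \<Rightarrow> nat" and mi pl :: "'a \<Rightarrow> 'a set"
    and m n :: nat and M P X Y :: "'a set"
  assumes pc: "parity_complex C dim mi pl"
    and rec: "\<And>M' P'. cell C dim mi pl M' P' \<Longrightarrow>
                receptive C mi pl M' \<and> receptive C mi pl P'"
    and MP: "n_cell C dim mi pl n M P"
    and XC: "X \<subseteq> grade dim C (Suc n)"
    and Xwf: "well_formed dim mi pl X"
    and Xcard: "finite X" "card X = m"
    and Xpm: "spm mi pl X \<subseteq> grade dim M n"
    and Ydef: "Y = (grade dim M n \<union> sminus mi X) - splus pl X"
  shows "(cell C dim mi pl (skel dim M (int n - 1) \<union> Y) (skel dim P (int n - 1) \<union> Y)
         \<and> sminus mi X \<inter> grade dim M n = {})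
         \<and> cell C dim mi pl (skel dim M (int n - 1) \<union> Y \<union> X) (P \<union> X)"
proof -
  interpret receptive_parity_cplx C dim mi pl
    using pc rec by unfold_locales blast+
  have Y: "Y = move_back mi pl X (grade dim M n)" unfolding Ydef move_back_def ..
  show ?thesis
    using n_cell_move_back[OF MP XC Xwf Xcard(1) Xpm] n_cell_move_back_add[OF MP XC Xwf Xcard(1) Xpm]
    unfolding Y n_cell_def by blast
qed

end
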